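(* Let $(\mathfrak{g},[\cdot,\cdot]_{\mathfrak{g}},\phi_{\mathfrak{g}})$ and $(\mathfrak{g}^*,[\cdot,\cdot]_{\mathfrak{g}^*},\phi_{\mathfrak{g}}^* )$ be two weakly involutive Hom-Lie algebras, where $\mathfrak{g}$ is finite-dimensional, $\mathfrak g^*$ is its dual space and $\phi_{\mathfrak{g}}^*$ is the dual map of $\phi_{\mathfrak{g}}$. Define $\Delta:\mathfrak{g}\to\mathfrak{g}\otimes\mathfrak{g}$ by $\langle \Delta(x),a\otimes b\rangle=\langle x,[a,b]_{\mathfrak{g}^*}\rangle$. Then the following conditions are equivalent: (i) $(\mathfrak{g},\mathfrak{g}^* )$ is a Hom-Lie bialgebra, i.e. $\Delta([x,y]_{\mathfrak{g}})=\mathrm{ad}_{\phi_{\mathfrak{g}}(x)}\Delta(y)-\mathrm{ad}_{\phi_{\mathfrak{g}}(y)}\Delta(x)$ for all $x,y\in\mathfrak{g}$; (ii) $(\mathfrak{g},\mathfrak{g}^*;\mathrm{ad}^\circ,\mathfrak{ad}^\circ)$ is a matched pair of Hom-Lie algebras; (iii) $(\mathfrak{g}\oplus\mathfrak{g}^*;\mathfrak{g},\mathfrak{g}^* )$ is a Manin triple of Hom-Lie algebras associated to the bilinear form $\mathfrak{B}(x+a,y+b)=\langle x,b\rangle+\langle y,a\rangle$ ($x,y\in\mathfrak g$, $a,b\in\mathfrak g^*$).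
   Context: A Hom-Lie algebra $(\mathfrak{h},[\cdot,\cdot]_{\mathfrak{h}},\phi_{\mathfrak{h}})$ is a vector space $\mathfrak h$ with a skew-symmetric bilinear map $[\cdot,\cdot]_{\mathfrak h}$ and a linear map $\phi_{\mathfrak h}$ satisfying $\phi_{\mathfrak h}[x,y]_{\mathfrak h}=[\phi_{\mathfrak h}(x),\phi_{\mathfrak h}(y)]_{\mathfrak h}$ and the Hom-Jacobi identity $[\phi_{\mathfrak h}(x),[y,z]_{\mathfrak h}]_{\mathfrak h}+[\phi_{\mathfrak h}(y),[z,x]_{\mathfrak h}]_{\mathfrak h}+[\phi_{\mathfrak h}(z),[x,y]_{\mathfrak h}]_{\mathfrak h}=0$. It is weakly involutive if $[\phi_{\mathfrak h}^2(x),y]_{\mathfrak h}=[x,y]_{\mathfrak h}$ for all $x,y$. A representation $(V,\beta,\rho)$ of $\mathfrak h$ is a vector space $V$, $\beta\in\mathfrak{gl}(V)$ and a linear map $\rho:\mathfrak h\to\mathfrak{gl}(V)$ with $\rho(\phi_{\mathfrak h}(x))\beta=\beta\rho(x)$ and $\rho([x,y]_{\mathfrak h})\beta=\rho(\phi_{\mathfrak h}(x))\rho(y)-\rho(\phi_{\mathfrak h}(y))\rho(x)$. The adjoint representation is $(\mathfrak h,\phi_{\mathfrak h},\mathrm{ad})$, $\mathrm{ad}_x y=[x,y]_{\mathfrak h}$. For $z\in\mathfrak g$ and $t\in\mathfrak g\otimes\mathfrak g$, $\mathrm{ad}_z t:=(\mathrm{ad}_z\otimes\phi_{\mathfrak g}+\phi_{\mathfrak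 g}\otimes \mathrm{ad}_z)t$. Here $\mathrm{ad}^\circ:\mathfrak g\to\mathfrak{gl}(\mathfrak g^* )$ is given by $\langle \mathrm{ad}^\circ_x a,y\rangle=-\langle a,[\phi_{\mathfrak g}(x),y]_{\mathfrak g}\rangle$ and $\mathfrak{ad}^\circ:\mathfrak g^*\to\mathfrak{gl}(\mathfrak g)$ is given by $\langle \mathfrak{ad}^\circ_a x,b\rangle=-\langle x,[\phi_{\mathfrak g}^*(a),b]_{\mathfrak g^*}\rangle$. A matched pair of Hom-Lie algebras $(\mathfrak g,\mathfrak g';\rho,\rho')$ consists of Hom-Lie algebras $(\mathfrak g,[\cdot,\cdot]_{\mathfrak g},\phi_{\mathfrak g})$, $(\mathfrak g',[\cdot,\cdot]_{\mathfrak g'},\phi_{\mathfrak g'})$, a representation $(\mathfrak g',\phi_{\mathfrak g'},\rho)$ of $\mathfrak g$ and a representation $(\mathfrak g,\phi_{\mathfrak g},\rho')$ of $\mathfrak g'$ such that for all $x,y\in\mathfrak g$, $x',y'\in\mathfrak g'$: $\rho'(\phi_{\mathfrak g'}(x'))[x,y]_{\mathfrak g}=[\rho'(x')x,\phi_{\mathfrak g}(y)]_{\mathfrak g}+[\phi_{\mathfrak g}(x),\rho'(x')y]_{\mathfrak g}+\rho'(\rho(y)x')\phi_{\mathfrak g}(x)-\rho'(\rho(x)x')\phi_{\mathfrak g}(y)$ and $\rho(\phi_{\mathfrak g}(x))[x',y']_{\mathfrak g'}=[\rho(x)x',\phi_{\mathfrak g'}(y')]_{\mathfrak g'}+[\phi_{\mathfrak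 g'}(x'),\rho(x)y']_{\mathfrak g'}+\rho(\rho'(y')x)\phi_{\mathfrak g'}(x')-\rho(\rho'(x')x)\phi_{\mathfrak g'}(y')$. A bilinear form $\mathfrak B$ on a Hom-Lie algebra $(\mathfrak k,[\cdot,\cdot]_{\mathfrak k},\phi_{\mathfrak k})$ is invariant if $\mathfrak B([x,y]_{\mathfrak k},z)=\mathfrak B(x,[\phi_{\mathfrak k}(y),z]_{\mathfrak k})$ and $\mathfrak B(\phi_{\mathfrak k}(x),y)=\mathfrak B(x,\phi_{\mathfrak k}(y))$ for all $x,y,z$. A Manin triple of Hom-Lie algebras $(\mathfrak k;\mathfrak g,\mathfrak g')$ is a Hom-Lie algebra $\mathfrak k$ with a nondegenerate symmetric invariant bilinear form $\mathfrak B$ such that $\mathfrak g,\mathfrak g'$ are isotropic Hom-Lie subalgebras of $\mathfrak k$ (subspaces closed under the bracket and stable under $\phi_{\mathfrak k}$, with the induced structures being the given Hom-Lie algebra structures) and $\mathfrak k=\mathfrak g\oplus\mathfrak g'$ as vector spaces. *)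

theory Defs
  imports Main "HOL-Library.Product_Plus" "HOL-Library.Function_Algebras"
begin

definition lin :: "('k \<Rightarrow> 'v \<Rightarrow> 'v) \<Rightarrow> ('k \<Rightarrow> 'w \<Rightarrow> 'w) \<Rightarrow> ('v::plus \<Rightarrow> 'w::plus) \<Rightarrow> bool" where
  "lin sv sw f \<longleftrightarrow> (\<forall>x y. f (x + y) = f x + f y) \<and> (\<forall>c x. f (sv c x) = sw c (f x))"

definition bilin :: "('k \<Rightarrow> 'v \<Rightarrow> 'v) \<Rightarrow> ('k \<Rightarrow> 'w \<Rightarrow> 'w) \<Rightarrow> ('v::plus \<Rightarrow> 'v \<Rightarrow> 'w::plus) \<Rightarrow> bool" where
  "bilin sv sw br \<longleftrightarrow> (\<forall>x. lin sv sw (br x)) \<and> (\<forall>y. lin sv sw (\<lambda>x. br x y))"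

definition hom_lie :: "('k \<Rightarrow> 'v \<Rightarrow> 'v) \<Rightarrow> ('v::ab_group_add \<Rightarrow> 'v \<Rightarrow> 'v) \<Rightarrow> ('v \<Rightarrow> 'v) \<Rightarrow> bool" where
  "hom_lie sm br phi \<longleftrightarrow> bilin sm sm br \<and> (\<forall>x y. br x y = - br y x) \<and> lin sm sm phi
     \<and> (\<forall>x y. phi (br x y) = br (phi x) (phi y))
     \<and> (\<forall>x y z. br (phi x) (br y z) + br (phi y) (br z x) + br (phi z) (br x y) = 0)"

definition weakly_involutive :: "('v \<Rightarrow> 'v \<Rightarrow> 'v) \<Rightarrow> ('v \<Rightarrow> 'v) \<Rightarrow> bool" where
  "weakly_involutive br phi \<longleftrightarrow> (\<forall>x y. br (phi (phi x)) y = br x y)"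

definition representation :: "('k \<Rightarrow> 'h \<Rightarrow> 'h) \<Rightarrow> ('h \<Rightarrow> 'h \<Rightarrow> 'h) \<Rightarrow> ('h \<Rightarrow> 'h)
    \<Rightarrow> ('k \<Rightarrow> 'v \<Rightarrow> 'v) \<Rightarrow> ('v \<Rightarrow> 'v) \<Rightarrow> ('h::ab_group_add \<Rightarrow> 'v::ab_group_add \<Rightarrow> 'v) \<Rightarrow> bool" where
  "representation smh brh phih smV beta rho \<longleftrightarrow>
     lin smV smV beta \<and> (\<forall>x. lin smV smV (rho x)) \<and> (\<forall>v. lin smh smV (\<lambda>x. rho x v))
     \<and> (\<forall>x v. rho (phih x) (beta v) = beta (rho x v))
     \<and> (\<forall>x y v. rho (brh x y) (beta v) = rho (phih x) (rho y v) - rho (phih y) (rho x v))"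

definition matched_pair :: "('k \<Rightarrow> 'g \<Rightarrow> 'g) \<Rightarrow> ('g \<Rightarrow> 'g \<Rightarrow> 'g) \<Rightarrow> ('g \<Rightarrow> 'g)
    \<Rightarrow> ('k \<Rightarrow> 'h \<Rightarrow> 'h) \<Rightarrow> ('h \<Rightarrow> 'h \<Rightarrow> 'h) \<Rightarrow> ('h \<Rightarrow> 'h)
    \<Rightarrow> ('g::ab_group_add \<Rightarrow> 'h::ab_group_add \<Rightarrow> 'h) \<Rightarrow> ('h \<Rightarrow> 'g \<Rightarrow> 'g) \<Rightarrow> bool" where
  "matched_pair smg brg phig smh brh phih rho rho' \<longleftrightarrow>
     hom_lie smg brg phig \<and> hom_lie smh brh phih
     \<and> representation smg brg phig smh phih rho
     \<and> representation smh brh phih smg phig rho'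
     \<and> (\<forall>x y x'. rho' (phih x') (brg x y) =
           brg (rho' x' x) (phig y) + brg (phig x) (rho' x' y)
           + rho' (rho y x') (phig x) - rho' (rho x x') (phig y))
     \<and> (\<forall>x x' y'. rho (phig x) (brh x' y') =
           brh (rho x x') (phih y') + brh (phih x') (rho x y')
           + rho (rho' y' x) (phih x') - rho (rho' x' x) (phih y'))"

definition invariant_form :: "('v \<Rightarrow> 'v \<Rightarrow> 'k) \<Rightarrow> ('v \<Rightarrow> 'v \<Rightarrow> 'v) \<Rightarrow> ('v \<Rightarrow> 'v) \<Rightarrow> bool" where
  "invariant_form B br phi \<longleftrightarrow> (\<forall>x y z. B (br x y) z = B x (br (phi y) z))
      \<and> (\<forall>x y. B (phi x) y = B x (phi y))"

section \<open>Coordinates: g = 'n \<Rightarrow> 'k, g* identified with 'n \<Rightarrow> 'k via the pairing below\<close>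

definition sc :: "'k::times \<Rightarrow> ('n \<Rightarrow> 'k) \<Rightarrow> ('n \<Rightarrow> 'k)" where
  "sc c x = (\<lambda>i. c * x i)"

definition psc :: "'k::times \<Rightarrow> ('n \<Rightarrow> 'k) \<times> ('n \<Rightarrow> 'k) \<Rightarrow> ('n \<Rightarrow> 'k) \<times> ('n \<Rightarrow> 'k)" where
  "psc c u = (sc c (fst u), sc c (snd u))"

definition pairing :: "('n::finite \<Rightarrow> 'k::field) \<Rightarrow> ('n \<Rightarrow> 'k) \<Rightarrow> 'k" where
  "pairing x a = (\<Sum>i\<in>UNIV. x i * a i)"

definition ev :: "'n \<Rightarrow> ('n \<Rightarrow> 'k::field)" where
  "ev j = (\<lambda>i. if i = j then 1 else 0)"

text \<open>Dual map: pairing x (dual_map phi a) = pairing (phi x) a.\<close>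
definition dual_map :: "(('n::finite \<Rightarrow> 'k::field) \<Rightarrow> ('n \<Rightarrow> 'k)) \<Rightarrow> ('n \<Rightarrow> 'k) \<Rightarrow> ('n \<Rightarrow> 'k)" where
  "dual_map phi a = (\<lambda>j. pairing (phi (ev j)) a)"

text \<open>ad-circ x a: pairing y (ad-circ x a) = - pairing [phi x, y] a.\<close>
definition adc :: "(('n::finite \<Rightarrow> 'k::field) \<Rightarrow> ('n \<Rightarrow> 'k) \<Rightarrow> ('n \<Rightarrow> 'k)) \<Rightarrow> (('n \<Rightarrow> 'k) \<Rightarrow> ('n \<Rightarrow> 'k))
    \<Rightarrow> ('n \<Rightarrow> 'k) \<Rightarrow> ('n \<Rightarrow> 'k) \<Rightarrow> ('n \<Rightarrow> 'k)" where
  "adc br phi x a = (\<lambda>j. - pairing (br (phi x) (ev j)) a)"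

text \<open>frak-ad-circ a x: pairing (frak-ad-circ a x) b = - pairing x [phi* a, b].\<close>
definition adcd :: "(('n::finite \<Rightarrow> 'k::field) \<Rightarrow> ('n \<Rightarrow> 'k) \<Rightarrow> ('n \<Rightarrow> 'k)) \<Rightarrow> (('n \<Rightarrow> 'k) \<Rightarrow> ('n \<Rightarrow> 'k))
    \<Rightarrow> ('n \<Rightarrow> 'k) \<Rightarrow> ('n \<Rightarrow> 'k) \<Rightarrow> ('n \<Rightarrow> 'k)" where
  "adcd brd phi a x = (\<lambda>j. - pairing x (brd (dual_map phi a) (ev j)))"

text \<open>Tensors in g \<otimes> g are coefficient arrays t p q w.r.t. the basis ev p \<otimes> ev q.\<close>
definition Delta :: "(('n::finite \<Rightarrow> 'k::field) \<Rightarrow> ('n \<Rightarrow> 'k) \<Rightarrow> ('n \<Rightarrow> 'k)) \<Rightarrow> ('n \<Rightarrow> 'k) \<Rightarrow> 'n \<Rightarrow> 'n \<Rightarrow> 'k" where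
  "Delta brd x = (\<lambda>p q. pairing x (brd (ev p) (ev q)))"

definition tmap :: "(('n::finite \<Rightarrow> 'k::field) \<Rightarrow> ('n \<Rightarrow> 'k)) \<Rightarrow> (('n \<Rightarrow> 'k) \<Rightarrow> ('n \<Rightarrow> 'k))
    \<Rightarrow> ('n \<Rightarrow> 'n \<Rightarrow> 'k) \<Rightarrow> 'n \<Rightarrow> 'n \<Rightarrow> 'k" where
  "tmap L M t = (\<lambda>i j. \<Sum>p\<in>UNIV. \<Sum>q\<in>UNIV. t p q * L (ev p) i * M (ev q) j)"

definition tad :: "(('n::finite \<Rightarrow> 'k::field) \<Rightarrow> ('n \<Rightarrow> 'k) \<Rightarrow> ('n \<Rightarrow> 'k)) \<Rightarrow> (('n \<Rightarrow> 'k) \<Rightarrow> ('n \<Rightarrow> 'k))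
    \<Rightarrow> ('n \<Rightarrow> 'k) \<Rightarrow> ('n \<Rightarrow> 'n \<Rightarrow> 'k) \<Rightarrow> 'n \<Rightarrow> 'n \<Rightarrow> 'k" where
  "tad br phi z t = (\<lambda>i j. tmap (br z) phi t i j + tmap phi (br z) t i j)"

definition hom_lie_bialgebra :: "(('n::finite \<Rightarrow> 'k::field) \<Rightarrow> ('n \<Rightarrow> 'k) \<Rightarrow> ('n \<Rightarrow> 'k)) \<Rightarrow> (('n \<Rightarrow> 'k) \<Rightarrow> ('n \<Rightarrow> 'k))
    \<Rightarrow> (('n \<Rightarrow> 'k) \<Rightarrow> ('n \<Rightarrow> 'k) \<Rightarrow> ('n \<Rightarrow> 'k)) \<Rightarrow> bool" where
  "hom_lie_bialgebra br phi brd \<longleftrightarrow>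
     (\<forall>x y. Delta brd (br x y) =
        (\<lambda>i j. tad br phi (phi x) (Delta brd y) i j - tad br phi (phi y) (Delta brd x) i j))"

definition Bform :: "('n::finite \<Rightarrow> 'k::field) \<times> ('n \<Rightarrow> 'k) \<Rightarrow> ('n \<Rightarrow> 'k) \<times> ('n \<Rightarrow> 'k) \<Rightarrow> 'k" where
  "Bform u v = pairing (fst u) (snd v) + pairing (fst v) (snd u)"

text \<open>Manin triple (k; g, g*) with k = g \<oplus> g* (as the product type), g embedded as (x,0), g* as (0,a),
  Hom-Lie structure (K, Phi) on k, and the given bilinear form B.\<close>
definition manin_triple_sum ::
  "(('n::finite \<Rightarrow> 'k::field) \<times> ('n \<Rightarrow> 'k) \<Rightarrow> ('n \<Rightarrow> 'k) \<times> ('n \<Rightarrow> 'k) \<Rightarrow> ('n \<Rightarrow> 'k) \<times> ('n \<Rightarrow> 'k))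
   \<Rightarrow> (('n \<Rightarrow> 'k) \<times> ('n \<Rightarrow> 'k) \<Rightarrow> ('n \<Rightarrow> 'k) \<times> ('n \<Rightarrow> 'k))
   \<Rightarrow> (('n \<Rightarrow> 'k) \<times> ('n \<Rightarrow> 'k) \<Rightarrow> ('n \<Rightarrow> 'k) \<times> ('n \<Rightarrow> 'k) \<Rightarrow> 'k)
   \<Rightarrow> (('n \<Rightarrow> 'k) \<Rightarrow> ('n \<Rightarrow> 'k) \<Rightarrow> ('n \<Rightarrow> 'k)) \<Rightarrow> (('n \<Rightarrow> 'k) \<Rightarrow> ('n \<Rightarrow> 'k))
   \<Rightarrow> (('n \<Rightarrow> 'k) \<Rightarrow> ('n \<Rightarrow> 'k) \<Rightarrow> ('n \<Rightarrow> 'k)) \<Rightarrow> (('n \<Rightarrow> 'k) \<Rightarrow> ('n \<Rightarrow> 'k)) \<Rightarrow> bool" where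
  "manin_triple_sum K Phi B br phi brd phid \<longleftrightarrow>
     hom_lie psc K Phi
     \<and> bilin psc (\<lambda>c s. c * s) B
     \<and> (\<forall>u v. B u v = B v u)
     \<and> (\<forall>u. (\<forall>v. B u v = 0) \<longrightarrow> u = 0)
     \<and> invariant_form B K Phi
     \<and> (\<forall>x y. K (x, 0) (y, 0) = (br x y, 0)) \<and> (\<forall>x. Phi (x, 0) = (phi x, 0))
     \<and> (\<forall>a b. K (0, a) (0, b) = (0, brd a b)) \<and> (\<forall>a. Phi (0, a) = (0, phid a))
     \<and> (\<forall>x y. B (x, 0) (y, 0) = 0) \<and> (\<forall>a b. B (0, a) (0, b) = 0)"

end

theory Submission
  imports Defs HOL.Modules
begin

(* All three conditions reduce to one scalar identity, cocycle_defect x y a b = 0: the pairing of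
   the cocycle condition for Delta with a (x) b.  Pairing the first matched-pair condition (an
   identity in g) with b, and the second (an identity in g* ) with y, yields minus this scalar, so
   (i) and (ii) agree.  For (iii), invariance of Bform forces the bracket on g + g* to be
   [x + a, y + b] = [x, y] + rho'(a) y - rho'(b) x + [a, b] + rho(x) b - rho(y) a;
   its Hom-Jacobi identity holds on g and on g* separately, and on mixed triples its two
   components are exactly the two matched-pair conditions. *)

section \<open>Coordinates and the pairing\<close>

lemma lin_additive: "lin sv sw f \<Longrightarrow> additive f"
  by (simp add: lin_def additive_def)

lemma lin_scale: "lin sv sw f \<Longrightarrow> f (sv c x) = sw c (f x)"
  unfolding lin_def by blast

lemmas lin_simps =
  additive.add[OF lin_additive] additive.minus[OF lin_additive] additive.diff[OF lin_additive]
  additive.zero[OF lin_additive] lin_scale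

lemma lin_scI:
  "(\<And>x y. f (x + y) = f x + f y) \<Longrightarrow> (\<And>c x. f (sc c x) = sc c (f x)) \<Longrightarrow> lin sc sc f"
  by (simp add: lin_def)

lemma sc_apply [simp]: "sc c x i = c * x i"
  by (simp add: sc_def)

lemma sc_add: "sc c (x + y) = sc c x + sc c y" and sc_diff: "sc c (x - y) = sc c x - sc c y"
  for x y :: "'n \<Rightarrow> 'k::ring"
  by (simp_all add: sc_def fun_eq_iff algebra_simps)

lemma sum_fun_apply: "(sum g A) x = (\<Sum>i\<in>A. g i x)"
  by (induction A rule: infinite_finite_induct) auto

lemma sum_sc_ev: "(\<Sum>j\<in>UNIV. sc (x j) (ev j)) = (x :: 'n::finite \<Rightarrow> 'k::field)"
  by (simp add: fun_eq_iff sum_fun_apply ev_def if_distrib cong: if_cong)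

lemma lin_expand_ev:
  fixes x :: "'n::finite \<Rightarrow> 'k::field" and f :: "_ \<Rightarrow> 'w::ab_group_add"
  assumes "lin sc sw f"
  shows "f x = (\<Sum>j\<in>UNIV. sw (x j) (f (ev j)))"
proof -
  have "f x = f (\<Sum>j\<in>UNIV. sc (x j) (ev j))" by (simp only: sum_sc_ev)
  also have "\<dots> = (\<Sum>j\<in>UNIV. sw (x j) (f (ev j)))"
    using assms by (simp add: additive.sum[OF lin_additive] lin_scale)
  finally show ?thesis .
qed

lemma bilin_expand_ev:
  fixes H :: "('n::finite \<Rightarrow> 'k::field) \<Rightarrow> ('n \<Rightarrow> 'k) \<Rightarrow> 'k"
  assumes "bilin sc (*) H"
  shows "H u v = (\<Sum>p\<in>UNIV. \<Sum>q\<in>UNIV. u p * v q * H (ev p) (ev q))"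
proof -
  have "H u v = (\<Sum>p\<in>UNIV. u p * H (ev p) v)"
    using assms unfolding bilin_def by (intro lin_expand_ev) blast
  also have "\<dots> = (\<Sum>p\<in>UNIV. u p * (\<Sum>q\<in>UNIV. v q * H (ev p) (ev q)))"
    using assms unfolding bilin_def by (subst lin_expand_ev[where f = "H _" and x = v]) blast+
  finally show ?thesis
    by (simp add: sum_distrib_left mult.assoc mult.left_commute)
qed

lemma pairing_commute: "pairing x a = pairing a x"
  by (simp add: pairing_def mult.commute)

lemma pairing_ev_right [simp]: "pairing x (ev j) = x j"
  by (simp add: pairing_def ev_def if_distrib cong: if_cong)

lemma pairing_ev_left [simp]: "pairing (ev j) x = x j"
  by (subst pairing_commute) simp

lemma lin_pairing_left: "lin sc (*) (\<lambda>x. pairing x a)"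
  by (simp add: lin_def pairing_def sum.distrib distrib_right sum_distrib_left mult.assoc)

lemma lin_pairing_right: "lin sc (*) (pairing x)"
  by (simp add: lin_def pairing_def sum.distrib distrib_left sum_distrib_left mult.left_commute)

lemmas pairing_simps [simp] = lin_simps[OF lin_pairing_left] lin_simps[OF lin_pairing_right]

text \<open>The coordinate definitions of \<open>dual_map\<close>, \<open>adc\<close> and \<open>adcd\<close> are instances of this.\<close>
lemma pairing_coordinates:
  assumes "lin sc (*) h"
  shows "pairing x (\<lambda>j. h (ev j)) = h x"
  using lin_expand_ev[OF assms, of x] by (simp add: pairing_def)

lemma lin_pairing_comp: "lin sc sc f \<Longrightarrow> lin sc (*) (\<lambda>x. pairing (f x) a)"
  by (simp add: lin_def)

lemma pairing_dual_map: "lin sc sc phi \<Longrightarrow> pairing x (dual_map phi a) = pairing (phi x) a"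
  unfolding dual_map_def by (rule pairing_coordinates[OF lin_pairing_comp])

lemma pairing_ext_right: "(\<And>y. pairing y u = pairing y v) \<Longrightarrow> u = v"
  by (metis ext pairing_ev_left)

lemma pairing_ext_left: "(\<And>b. pairing u b = pairing v b) \<Longrightarrow> u = v"
  by (metis ext pairing_ev_right)

section \<open>Hom-Lie algebras and the form on \<open>g \<oplus> g*\<close>\<close>

lemma hom_lie_leibniz:
  assumes "hom_lie sm br phi"
  shows "br (br x y) (phi z) = br (phi x) (br y z) - br (phi y) (br x z)"
proof -
  have skew: "br u v = - br v u" for u v
    using assms unfolding hom_lie_def by blast
  have lin: "lin sm sm (br u)" for u
    using assms unfolding hom_lie_def bilin_def by blast
  have jacobi: "br (phi x) (br y z) + br (phi y) (br z x) + br (phi z) (br x y) = 0"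
    using assms unfolding hom_lie_def by blast
  have "br (br x y) (phi z) = - br (phi z) (br x y)" by (rule skew)
  also have "\<dots> = br (phi x) (br y z) + br (phi y) (br z x)"
    using jacobi by (simp add: neg_eq_iff_add_eq_0 add.commute)
  also have "br (phi y) (br z x) = - br (phi y) (br x z)"
    by (subst skew) (simp add: lin_simps[OF lin])
  finally show ?thesis by simp
qed

definition hom_jacobiator :: "('v \<Rightarrow> 'v \<Rightarrow> 'v::plus) \<Rightarrow> ('v \<Rightarrow> 'v) \<Rightarrow> 'v \<Rightarrow> 'v \<Rightarrow> 'v \<Rightarrow> 'v" where
  "hom_jacobiator br phi x y z = br (phi x) (br y z) + br (phi y) (br z x) + br (phi z) (br x y)"

lemma hom_lie_iff_hom_jacobiator:
  "hom_lie sm br phi \<longleftrightarrow> bilin sm sm br \<and> (\<forall>x y. br x y = - br y x) \<and> lin sm sm phi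
     \<and> (\<forall>x y. phi (br x y) = br (phi x) (phi y)) \<and> (\<forall>x y z. hom_jacobiator br phi x y z = 0)"
  by (simp add: hom_lie_def hom_jacobiator_def)

lemma hom_jacobiator_cycle:
  "hom_jacobiator br phi x y z = hom_jacobiator br (phi :: 'v::ab_semigroup_add \<Rightarrow> 'v) y z x"
  by (simp add: hom_jacobiator_def ac_simps)

lemma hom_jacobiator_add:
  fixes br :: "'v::ab_group_add \<Rightarrow> 'v \<Rightarrow> 'v"
  assumes "bilin sm sm br" and "lin sm sm phi"
  shows "hom_jacobiator br phi (x + x') y z = hom_jacobiator br phi x y z + hom_jacobiator br phi x' y z"
    and "hom_jacobiator br phi x (y + y') z = hom_jacobiator br phi x y z + hom_jacobiator br phi x y' z"
    and "hom_jacobiator br phi x y (z + z') = hom_jacobiator br phi x y z + hom_jacobiator br phi x y z'"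
proof -
  have "hom_jacobiator br phi (x + x') y z = hom_jacobiator br phi x y z + hom_jacobiator br phi x' y z"
    for x x' y z
  proof -
    have lin_right: "lin sm sm (br u)" and lin_left: "lin sm sm (\<lambda>u. br u v)" for u v
      using assms(1) unfolding bilin_def by blast+
    show ?thesis
      by (simp add: hom_jacobiator_def lin_simps[OF lin_right] lin_simps[OF lin_left]
          lin_simps[OF assms(2)] algebra_simps)
  qed
  then show "hom_jacobiator br phi (x + x') y z = hom_jacobiator br phi x y z + hom_jacobiator br phi x' y z"
    and "hom_jacobiator br phi x (y + y') z = hom_jacobiator br phi x y z + hom_jacobiator br phi x y' z"
    and "hom_jacobiator br phi x y (z + z') = hom_jacobiator br phi x y z + hom_jacobiator br phi x y z'"
    by (metis hom_jacobiator_cycle)+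
qed

lemma Bform_Pair [simp]: "Bform (x, a) (y, b) = pairing x b + pairing y a"
  by (simp add: Bform_def)

lemma bilin_Bform: "bilin psc (\<lambda>c s. c * s) Bform"
  unfolding bilin_def lin_def Bform_def psc_def by (simp add: algebra_simps)

lemma Bform_commute: "Bform u v = Bform v u"
  by (simp add: Bform_def add.commute)

lemma Bform_ev:
  shows Bform_ev_right: "Bform u (0, ev j) = fst u j" and Bform_ev_left: "Bform u (ev j, 0) = snd u j"
  by (simp_all add: Bform_def)

lemma Bform_nondegenerate: "(\<And>v. Bform u v = 0) \<Longrightarrow> u = 0"
  by (metis Bform_ev prod_eq_iff fun_eq_iff zero_fun_apply fst_zero snd_zero)

lemma manin_triple_sumD:
  assumes "manin_triple_sum K Phi B br phi brd phid"
  shows "hom_lie psc K Phi" and "invariant_form B K Phi"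
    and "K (x, 0) (y, 0) = (br x y, 0)" and "K (0, a) (0, b) = (0, brd a b)"
    and "Phi (x, 0) = (phi x, 0)" and "Phi (0, a) = (0, phid a)"
  using assms unfolding manin_triple_sum_def by blast+

section \<open>Bialgebras and matched pairs\<close>

locale hom_lie_dual_pair =
  fixes br brd :: "('n::finite \<Rightarrow> 'k::field) \<Rightarrow> ('n \<Rightarrow> 'k) \<Rightarrow> ('n \<Rightarrow> 'k)"
    and phi :: "('n \<Rightarrow> 'k) \<Rightarrow> ('n \<Rightarrow> 'k)"
  assumes hom_lie_g: "hom_lie sc br phi" and weakly_involutive_g: "weakly_involutive br phi"
    and hom_lie_dual: "hom_lie sc brd (dual_map phi)"
    and weakly_involutive_dual: "weakly_involutive brd (dual_map phi)"
begin

abbreviation "phid \<equiv> dual_map phi"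
abbreviation "rho \<equiv> adc br phi"
abbreviation "rho' \<equiv> adcd brd phi"

lemma
  shows lin_br_left: "lin sc sc (\<lambda>x. br x y)" and lin_br_right: "lin sc sc (br x)"
    and lin_phi: "lin sc sc phi" and br_skew: "br x y = - br y x"
    and phi_br: "phi (br x y) = br (phi x) (phi y)"
    and br_jacobi: "br (phi x) (br y z) + br (phi y) (br z x) + br (phi z) (br x y) = 0"
  using hom_lie_g unfolding hom_lie_def bilin_def by blast+

lemma
  shows lin_brd_left: "lin sc sc (\<lambda>a. brd a b)" and lin_brd_right: "lin sc sc (brd a)"
    and lin_phid: "lin sc sc phid" and brd_skew: "brd a b = - brd b a"
    and phid_brd: "phid (brd a b) = brd (phid a) (phid b)"
    and brd_jacobi: "brd (phid a) (brd b c) + brd (phid b) (brd c a) + brd (phid c) (brd a b) = 0"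
  using hom_lie_dual unfolding hom_lie_def bilin_def by blast+

lemma br_phi_phi [simp]: "br (phi (phi x)) y = br x y"
  using weakly_involutive_g by (simp add: weakly_involutive_def)

lemma brd_phid_phid [simp]: "brd (phid (phid a)) b = brd a b"
  using weakly_involutive_dual by (simp add: weakly_involutive_def)

lemmas bracket_lin_simps [simp] =
  lin_simps[OF lin_br_left] lin_simps[OF lin_br_right] lin_simps[OF lin_phi]
  lin_simps[OF lin_brd_left] lin_simps[OF lin_brd_right] lin_simps[OF lin_phid]

lemma phi_br_phi: "phi (br (phi x) y) = br x (phi y)"
  by (simp add: phi_br)

lemma phid_brd_phid: "phid (brd (phid a) b) = brd a (phid b)"
  by (simp add: phid_brd)

lemma
  shows lin_rho_left: "lin sc sc (\<lambda>x. rho x a)" and lin_rho_right: "lin sc sc (rho x)"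
    and lin_rho'_left: "lin sc sc (\<lambda>a. rho' a x)" and lin_rho'_right: "lin sc sc (rho' a)"
  by (rule lin_scI; simp add: adc_def adcd_def fun_eq_iff)+

lemmas rho_lin_simps [simp] =
  lin_simps[OF lin_rho_left] lin_simps[OF lin_rho_right]
  lin_simps[OF lin_rho'_left] lin_simps[OF lin_rho'_right]

lemma pairing_phid: "pairing x (phid a) = pairing (phi x) a"
  by (rule pairing_dual_map[OF lin_phi])

lemma pairing_rho: "pairing y (rho x a) = - pairing (br (phi x) y) a"
  unfolding adc_def by (rule pairing_coordinates[of "\<lambda>y. - pairing (br (phi x) y) a"]) (simp add: lin_def)

lemma pairing_br_phi: "pairing (br (phi x) y) a = - pairing y (rho x a)"
  by (simp add: pairing_rho)

lemma pairing_rho': "pairing (rho' a x) b = - pairing x (brd (phid a) b)"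
  unfolding adcd_def pairing_commute[of _ b]
  by (rule pairing_coordinates[of "\<lambda>b. - pairing x (brd (phid a) b)"]) (simp add: lin_def)

lemma rho_phi: "rho (phi x) (phid a) = phid (rho x a)"
  by (rule pairing_ext_right) (simp add: pairing_rho pairing_phid phi_br_phi phi_br)

lemma rho_br: "rho (br x y) (phid a) = rho (phi x) (rho y a) - rho (phi y) (rho x a)"
proof (rule pairing_ext_right)
  fix z
  show "pairing z (rho (br x y) (phid a)) = pairing z (rho (phi x) (rho y a) - rho (phi y) (rho x a))"
    by (simp add: pairing_rho pairing_phid phi_br_phi hom_lie_leibniz[OF hom_lie_g])
qed

lemma rho'_phid: "rho' (phid a) (phi x) = phi (rho' a x)"
  by (rule pairing_ext_left) (simp add: pairing_rho' pairing_phid[symmetric] phid_brd_phid phid_brd)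

lemma rho'_brd: "rho' (brd a b) (phi x) = rho' (phid a) (rho' b x) - rho' (phid b) (rho' a x)"
proof (rule pairing_ext_left)
  fix c
  show "pairing (rho' (brd a b) (phi x)) c = pairing (rho' (phid a) (rho' b x) - rho' (phid b) (rho' a x)) c"
    by (simp add: pairing_rho' pairing_phid[symmetric] phid_brd_phid hom_lie_leibniz[OF hom_lie_dual])
qed

lemma representation_rho: "representation sc br phi sc phid rho"
  unfolding representation_def using lin_phid lin_rho_left lin_rho_right rho_phi rho_br by blast

lemma representation_rho': "representation sc brd phid sc phi rho'"
  unfolding representation_def using lin_phi lin_rho'_left lin_rho'_right rho'_phid rho'_brd by blast

text \<open>The pairing of \<open>\<Delta>[x,y] - ad\<^bsub>\<phi> x\<^esub> \<Delta> y + ad\<^bsub>\<phi> y\<^esub> \<Delta> x\<close> with \<open>a \<otimes> b\<close>.\<close>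
definition cocycle_defect :: "('n \<Rightarrow> 'k) \<Rightarrow> ('n \<Rightarrow> 'k) \<Rightarrow> ('n \<Rightarrow> 'k) \<Rightarrow> ('n \<Rightarrow> 'k) \<Rightarrow> 'k" where
  "cocycle_defect x y a b = pairing (br x y) (brd a b)
     + pairing y (brd (rho x a) (phid b) + brd (phid a) (rho x b))
     - pairing x (brd (rho y a) (phid b) + brd (phid a) (rho y b))"

definition matched_defect_g :: "('n \<Rightarrow> 'k) \<Rightarrow> ('n \<Rightarrow> 'k) \<Rightarrow> ('n \<Rightarrow> 'k) \<Rightarrow> ('n \<Rightarrow> 'k)" where
  "matched_defect_g x y a = rho' (phid a) (br x y)
     - (br (rho' a x) (phi y) + br (phi x) (rho' a y) + rho' (rho y a) (phi x) - rho' (rho x a) (phi y))"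

definition matched_defect_dual :: "('n \<Rightarrow> 'k) \<Rightarrow> ('n \<Rightarrow> 'k) \<Rightarrow> ('n \<Rightarrow> 'k) \<Rightarrow> ('n \<Rightarrow> 'k)" where
  "matched_defect_dual x a b = rho (phi x) (brd a b)
     - (brd (rho x a) (phid b) + brd (phid a) (rho x b) + rho (rho' b x) (phid a) - rho (rho' a x) (phid b))"

lemma bilin_cocycle_defect: "bilin sc (*) (cocycle_defect x y)"
  unfolding bilin_def lin_def cocycle_defect_def by (simp add: algebra_simps)

lemma tmap_Delta: "tmap L M (Delta brd y) i j = pairing y (brd (\<lambda>p. L (ev p) i) (\<lambda>q. M (ev q) j))"
proof -
  have "bilin sc (*) (\<lambda>a b. pairing y (brd a b))"
    by (simp add: bilin_def lin_def)
  then show ?thesis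
    unfolding tmap_def Delta_def by (subst bilin_expand_ev) (auto simp: ac_simps)
qed

lemma tad_phi_Delta:
  "tad br phi (phi x) (Delta brd y) i j
     = - pairing y (brd (rho x (ev i)) (phid (ev j)) + brd (phid (ev i)) (rho x (ev j)))"
proof -
  have "(\<lambda>p. br (phi x) (ev p) k) = - rho x (ev k)" and "(\<lambda>p. phi (ev p) k) = phid (ev k)" for k
    by (simp_all add: adc_def dual_map_def fun_eq_iff)
  then show ?thesis
    unfolding tad_def tmap_Delta by simp
qed

lemma hom_lie_bialgebra_iff_cocycle_defect:
  "hom_lie_bialgebra br phi brd \<longleftrightarrow> (\<forall>x y a b. cocycle_defect x y a b = 0)"
proof -
  have "hom_lie_bialgebra br phi brd \<longleftrightarrow> (\<forall>x y i j. cocycle_defect x y (ev i) (ev j) = 0)"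
    unfolding hom_lie_bialgebra_def fun_eq_iff tad_phi_Delta cocycle_defect_def
    by (simp add: Delta_def algebra_simps)
  also have "\<dots> \<longleftrightarrow> (\<forall>x y a b. cocycle_defect x y a b = 0)"
  proof (intro iffI allI)
    fix x y a b
    assume "\<forall>x y i j. cocycle_defect x y (ev i) (ev j) = 0"
    then show "cocycle_defect x y a b = 0"
      by (subst bilin_expand_ev[OF bilin_cocycle_defect]) simp
  qed simp
  finally show ?thesis .
qed

lemma pairing_matched_defect_g: "pairing (matched_defect_g x y a) b = - cocycle_defect x y a b"
proof -
  have "pairing (br (rho' a x) (phi y)) b = - pairing x (brd (phid a) (rho y b))"
    by (subst br_skew) (simp add: pairing_br_phi pairing_rho')
  moreover have "pairing (br (phi x) (rho' a y)) b = pairing y (brd (phid a) (rho x b))"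
    by (simp add: pairing_br_phi pairing_rho')
  ultimately show ?thesis
    unfolding matched_defect_g_def cocycle_defect_def
    by (simp add: pairing_rho' pairing_phid[symmetric] phid_brd_phid algebra_simps)
qed

lemma pairing_matched_defect_dual: "pairing y (matched_defect_dual x a b) = - cocycle_defect x y a b"
proof -
  have pairing_rho_rho': "pairing y (rho (rho' b x) (phid a)) = pairing x (brd (phid b) (rho y a))" for a b
  proof -
    have "pairing y (rho (rho' b x) (phid a)) = - pairing (br (rho' b x) (phi y)) a"
      by (simp add: pairing_rho pairing_phid phi_br_phi)
    also have "\<dots> = pairing x (brd (phid b) (rho y a))"
      by (subst br_skew) (simp add: pairing_br_phi pairing_rho')
    finally show ?thesis .
  qed
  show ?thesis
    unfolding matched_defect_dual_def cocycle_defect_def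
    using brd_skew[of "phid b" "rho y a"]
    by (simp only: pairing_simps pairing_rho_rho') (simp add: pairing_rho algebra_simps)
qed

lemma matched_pair_iff_matched_defects:
  "matched_pair sc br phi sc brd phid rho rho'
     \<longleftrightarrow> (\<forall>x y a. matched_defect_g x y a = 0) \<and> (\<forall>x a b. matched_defect_dual x a b = 0)"
  unfolding matched_pair_def matched_defect_g_def matched_defect_dual_def
  using hom_lie_g hom_lie_dual representation_rho representation_rho' by simp

lemma hom_lie_bialgebra_iff_matched_pair:
  "hom_lie_bialgebra br phi brd \<longleftrightarrow> matched_pair sc br phi sc brd phid rho rho'"
proof -
  have "matched_defect_g x y a = 0 \<longleftrightarrow> (\<forall>b. pairing (matched_defect_g x y a) b = 0)" for x y a
    using pairing_ext_left[of "matched_defect_g x y a" 0] by auto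
  moreover have "matched_defect_dual x a b = 0 \<longleftrightarrow> (\<forall>y. pairing y (matched_defect_dual x a b) = 0)" for x a b
    using pairing_ext_right[of "matched_defect_dual x a b" 0] by auto
  ultimately show ?thesis
    unfolding matched_pair_iff_matched_defects hom_lie_bialgebra_iff_cocycle_defect
    by (simp add: pairing_matched_defect_g pairing_matched_defect_dual) blast
qed

section \<open>The double \<open>g \<oplus> g*\<close>\<close>

definition double_bracket ::
  "('n \<Rightarrow> 'k) \<times> ('n \<Rightarrow> 'k) \<Rightarrow> ('n \<Rightarrow> 'k) \<times> ('n \<Rightarrow> 'k) \<Rightarrow> ('n \<Rightarrow> 'k) \<times> ('n \<Rightarrow> 'k)" where
  "double_bracket u v =
     (br (fst u) (fst v) + rho' (snd u) (fst v) - rho' (snd v) (fst u),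
      brd (snd u) (snd v) + rho (fst u) (snd v) - rho (fst v) (snd u))"

lemma double_bracket_Pair [simp]:
  "double_bracket (x, a) (y, b) = (br x y + rho' a y - rho' b x, brd a b + rho x b - rho y a)"
  by (simp add: double_bracket_def)

lemma bilin_double_bracket: "bilin psc psc double_bracket"
  unfolding bilin_def lin_def double_bracket_def psc_def
  by (simp add: sc_add sc_diff)

lemma lin_map_prod: "lin psc psc (map_prod phi phid)"
  unfolding lin_def psc_def by simp

lemma double_bracket_skew: "double_bracket u v = - double_bracket v u"
  using br_skew[of "fst u" "fst v"] brd_skew[of "snd u" "snd v"]
  by (simp add: double_bracket_def algebra_simps)

lemma map_prod_double_bracket:
  "map_prod phi phid (double_bracket u v) = double_bracket (map_prod phi phid u) (map_prod phi phid v)"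
  by (simp add: double_bracket_def map_prod_def split_beta rho_phi rho'_phid phi_br phid_brd)

abbreviation "jacobiator_double \<equiv> hom_jacobiator double_bracket (map_prod phi phid)"

lemma jacobiator_double_g: "jacobiator_double (x, 0) (y, 0) (z, 0) = 0"
  using br_jacobi[of x y z] by (simp add: hom_jacobiator_def zero_prod_def)

lemma jacobiator_double_dual: "jacobiator_double (0, a) (0, b) (0, c) = 0"
  using brd_jacobi[of a b c] by (simp add: hom_jacobiator_def zero_prod_def)

lemma jacobiator_double_g_g_dual: "jacobiator_double (x, 0) (y, 0) (0, c) = (matched_defect_g x y c, 0)"
  using br_skew[of "rho' c x" "phi y"] rho_br[of x y c]
  by (simp add: hom_jacobiator_def matched_defect_g_def algebra_simps)

lemma jacobiator_double_dual_dual_g: "jacobiator_double (0, a) (0, b) (x, 0) = (0, matched_defect_dual x a b)"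
  using brd_skew[of "rho x a" "phid b"] rho'_brd[of a b x]
  by (simp add: hom_jacobiator_def matched_defect_dual_def algebra_simps)

lemma jacobiator_double_eq_0_iff:
  "(\<forall>u v w. jacobiator_double u v w = 0)
     \<longleftrightarrow> (\<forall>x y a. matched_defect_g x y a = 0) \<and> (\<forall>x a b. matched_defect_dual x a b = 0)"
proof (intro iffI conjI allI)
  assume "\<forall>u v w. jacobiator_double u v w = 0"
  then show "matched_defect_g x y a = 0" and "matched_defect_dual x a b = 0" for x y a b
    by (metis jacobiator_double_g_g_dual jacobiator_double_dual_dual_g prod.inject zero_prod_def)+
next
  fix u v w :: "('n \<Rightarrow> 'k) \<times> ('n \<Rightarrow> 'k)"
  assume "(\<forall>x y a. matched_defect_g x y a = 0) \<and> (\<forall>x a b. matched_defect_dual x a b = 0)"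
  then have g_g_dual: "jacobiator_double (x, 0) (y, 0) (0, c) = 0"
    and dual_dual_g: "jacobiator_double (0, a) (0, b) (x, 0) = 0" for x y a b c
    by (simp_all add: jacobiator_double_g_g_dual jacobiator_double_dual_dual_g zero_prod_def)
  then have mixed: "jacobiator_double (x, 0) (0, b) (z, 0) = 0" "jacobiator_double (0, a) (y, 0) (z, 0) = 0"
    "jacobiator_double (x, 0) (0, b) (0, c) = 0" "jacobiator_double (0, a) (y, 0) (0, c) = 0"
    for x y z a b c
    by (metis hom_jacobiator_cycle)+
  have "jacobiator_double u v w = jacobiator_double
      ((fst u, 0) + (0, snd u)) ((fst v, 0) + (0, snd v)) ((fst w, 0) + (0, snd w))"
    by simp
  also have "\<dots> = 0"
    unfolding hom_jacobiator_add[OF bilin_double_bracket lin_map_prod]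
    by (simp add: jacobiator_double_g jacobiator_double_dual g_g_dual dual_dual_g mixed)
  finally show "jacobiator_double u v w = 0" .
qed

lemma hom_lie_double_iff_matched_pair:
  "hom_lie psc double_bracket (map_prod phi phid) \<longleftrightarrow> matched_pair sc br phi sc brd phid rho rho'"
  unfolding hom_lie_iff_hom_jacobiator matched_pair_iff_matched_defects jacobiator_double_eq_0_iff
  using bilin_double_bracket double_bracket_skew lin_map_prod map_prod_double_bracket by blast

lemma invariant_form_Bform_double: "invariant_form Bform double_bracket (map_prod phi phid)"
  unfolding invariant_form_def
proof (intro conjI allI)
  fix u v w :: "('n \<Rightarrow> 'k) \<times> ('n \<Rightarrow> 'k)"
  obtain x a y b z c where "u = (x, a)" and "v = (y, b)" and "w = (z, c)"
    by (cases u, cases v, cases w)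
  moreover have "pairing (phi y) (brd (phid c) a) = pairing y (brd c (phid a))"
    by (simp add: pairing_phid[symmetric] phid_brd_phid)
  ultimately show "Bform (double_bracket u v) w = Bform u (double_bracket (map_prod phi phid v) w)"
    using br_skew[of y x] br_skew[of z "phi x"] brd_skew[of b a] brd_skew[of c "phid a"]
    by (simp add: pairing_rho pairing_rho' pairing_phid phi_br_phi algebra_simps)
next
  fix u v :: "('n \<Rightarrow> 'k) \<times> ('n \<Rightarrow> 'k)"
  show "Bform (map_prod phi phid u) v = Bform u (map_prod phi phid v)"
    by (cases u, cases v) (simp add: pairing_phid pairing_commute add.commute)
qed

lemma manin_triple_double:
  "hom_lie psc double_bracket (map_prod phi phid)
     \<Longrightarrow> manin_triple_sum double_bracket (map_prod phi phid) Bform br phi brd phid"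
  unfolding manin_triple_sum_def
  using bilin_Bform Bform_commute Bform_nondegenerate invariant_form_Bform_double
  by (simp del: split_paired_All) blast

text \<open>Invariance of \<open>Bform\<close> forces the mixed brackets of any Manin triple on \<open>g \<oplus> g*\<close>.\<close>
lemma manin_triple_mixed_bracket:
  assumes "manin_triple_sum K Phi Bform br phi brd phid"
  shows "K (x, 0) (0, b) = (- rho' b x, rho x b)"
proof -
  note K_g = manin_triple_sumD(3)[OF assms] and K_dual = manin_triple_sumD(4)[OF assms]
    and Phi_dual = manin_triple_sumD(6)[OF assms] and Phi_g = manin_triple_sumD(5)[OF assms]
  have inv: "Bform (K u v) w = Bform u (K (Phi v) w)" for u v w
    using manin_triple_sumD(2)[OF assms] unfolding invariant_form_def by blast
  have skew: "K u v = - K v u" for u v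
    using manin_triple_sumD(1)[OF assms] unfolding hom_lie_def by blast
  have "fst (K (x, 0) (0, b)) j = - rho' b x j" for j
  proof -
    have "fst (K (x, 0) (0, b)) j = Bform (K (x, 0) (0, b)) (0, ev j)"
      by (simp only: Bform_ev_right)
    also have "\<dots> = - rho' b x j"
      unfolding inv Phi_dual K_dual by (simp add: adcd_def)
    finally show ?thesis .
  qed
  moreover have "snd (K (x, 0) (0, b)) j = rho x b j" for j
  proof -
    have "snd (K (x, 0) (0, b)) j = Bform (- K (0, b) (x, 0)) (ev j, 0)"
      by (subst skew) (simp only: Bform_ev_left)
    also have "\<dots> = - Bform (K (0, b) (x, 0)) (ev j, 0)"
      by (simp add: Bform_def)
    also have "\<dots> = rho x b j"
      unfolding inv Phi_g K_g by (simp add: adc_def)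
    finally show ?thesis .
  qed
  ultimately show ?thesis
    by (simp add: prod_eq_iff fun_eq_iff)
qed

lemma manin_triple_unique:
  assumes "manin_triple_sum K Phi Bform br phi brd phid"
  shows "K = double_bracket" and "Phi = map_prod phi phid"
proof -
  have "bilin psc psc K" and lin_Phi: "lin psc psc Phi" and skew: "K u v = - K v u" for u v
    using manin_triple_sumD(1)[OF assms] unfolding hom_lie_def by blast+
  then have lin_right: "lin psc psc (K u)" and lin_left: "lin psc psc (\<lambda>u. K u v)" for u v
    unfolding bilin_def by blast+
  have split: "p = (fst p, 0) + (0, snd p)" for p :: "('n \<Rightarrow> 'k) \<times> ('n \<Rightarrow> 'k)"
    by simp
  have K_dual_g: "K (0, a) (y, 0) = (rho' a y, - rho y a)" for a y
    by (subst skew) (simp add: manin_triple_mixed_bracket[OF assms])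
  show "K = double_bracket"
  proof (intro ext)
    fix u v :: "('n \<Rightarrow> 'k) \<times> ('n \<Rightarrow> 'k)"
    have "K u v = K ((fst u, 0) + (0, snd u)) ((fst v, 0) + (0, snd v))"
      by (simp only: split[symmetric])
    also have "\<dots> = double_bracket u v"
      by (simp only: lin_simps[OF lin_right] lin_simps[OF lin_left])
        (simp add: manin_triple_mixed_bracket[OF assms] K_dual_g manin_triple_sumD(3,4)[OF assms]
          double_bracket_def)
    finally show "K u v = double_bracket u v" .
  qed
  show "Phi = map_prod phi phid"
  proof
    fix u :: "('n \<Rightarrow> 'k) \<times> ('n \<Rightarrow> 'k)"
    have "Phi u = Phi ((fst u, 0) + (0, snd u))"
      by (simp only: split[symmetric])
    then show "Phi u = map_prod phi phid u"
      by (simp only: lin_simps[OF lin_Phi]) (simp add: manin_triple_sumD(5,6)[OF assms] map_prod_def split_beta)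
  qed
qed

lemma matched_pair_iff_manin_triple:
  "matched_pair sc br phi sc brd phid rho rho' \<longleftrightarrow> (\<exists>K Phi. manin_triple_sum K Phi Bform br phi brd phid)"
proof
  assume "matched_pair sc br phi sc brd phid rho rho'"
  then show "\<exists>K Phi. manin_triple_sum K Phi Bform br phi brd phid"
    using hom_lie_double_iff_matched_pair manin_triple_double by blast
next
  assume "\<exists>K Phi. manin_triple_sum K Phi Bform br phi brd phid"
  then obtain K Phi where "manin_triple_sum K Phi Bform br phi brd phid"
    by blast
  then have "hom_lie psc double_bracket (map_prod phi phid)"
    using manin_triple_sumD(1) manin_triple_unique by metis
  then show "matched_pair sc br phi sc brd phid rho rho'"
    using hom_lie_double_iff_matched_pair by blast
qed

end

theorem theorem3p12:
  fixes br brd :: "('n::finite \<Rightarrow> 'k::field) \<Rightarrow> ('n \<Rightarrow> 'k) \<Rightarrow> ('n \<Rightarrow> 'k)"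
    and phi :: "('n \<Rightarrow> 'k) \<Rightarrow> ('n \<Rightarrow> 'k)"
  assumes "hom_lie sc br phi" and "weakly_involutive br phi"
    and "hom_lie sc brd (dual_map phi)" and "weakly_involutive brd (dual_map phi)"
  shows "(hom_lie_bialgebra br phi brd \<longleftrightarrow>
            matched_pair sc br phi sc brd (dual_map phi) (adc br phi) (adcd brd phi))
       \<and> (matched_pair sc br phi sc brd (dual_map phi) (adc br phi) (adcd brd phi) \<longleftrightarrow>
            (\<exists>K Phi. manin_triple_sum K Phi Bform br phi brd (dual_map phi)))"
proof -
  interpret hom_lie_dual_pair br brd phi
    using assms by unfold_locales
  show ?thesis
    using hom_lie_bialgebra_iff_matched_pair matched_pair_iff_manin_triple by blast
qed

end
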